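(* Let $\Psi=(\psi_{ij})$ and $\Phi=(\phi_{ij})$ be orthogonal quantum Latin squares of order $6$ in standard form. If some entry $\psi_{ij}$ has weight $4$, then every entry $\phi_{kj}$, $k=1,\dots,6$, of the $j$-th column of $\Phi$ has weight $1$.
   Context: A quantum Latin square (QLS) of order $n$ is an $n\times n$ matrix $\Psi=(\psi_{ij})_{1\le i,j\le n}$ whose entries are unit vectors in $\mathbb C^n$ such that the entries of each row and the entries of each column form an orthonormal basis of $\mathbb C^n$. Two QLS $\Psi=(\psi_{ij})$ and $\Phi=(\phi_{ij})$ of order $n$ are orthogonal if $\{\psi_{ij}\otimes\phi_{ij}: 1\le i,j\le n\}$ is an orthonormal basis of $\mathbb C^n\otimes\mathbb C^n$. Fix the standard orthonormal basis $\ket{1},\dots,\ket{n}$ of $\mathbb C^n$. The support of a vector $v$ is $\{k:\braket{k}{v}\neq 0\}$ and its weight is the size of its support. A pair $\Psi,\Phi$ is in standard form if $\psi_{1j}=\phi_{1j}=\ket{j}$ for all $j=1,\dots,n$. *)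

theory Defs
  imports "HOL-Analysis.Analysis"
begin

text \<open>Vectors of C^n are modelled as functions nat => complex whose coordinates
  (w.r.t. the standard basis |1>,...,|n>) are indexed by 1..n and vanish outside.\<close>

definition cvec :: "nat \<Rightarrow> (nat \<Rightarrow> complex) \<Rightarrow> bool" where
  "cvec n v \<longleftrightarrow> (\<forall>k. k \<notin> {1..n} \<longrightarrow> v k = 0)"

definition cinner :: "nat \<Rightarrow> (nat \<Rightarrow> complex) \<Rightarrow> (nat \<Rightarrow> complex) \<Rightarrow> complex" where
  "cinner n u v = (\<Sum>k\<in>{1..n}. cnj (u k) * v k)"

definition onb :: "'i set \<Rightarrow> 'k set \<Rightarrow> ('i \<Rightarrow> 'k \<Rightarrow> complex) \<Rightarrow> bool" where
  "onb I D b \<longleftrightarrow>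
     (\<forall>i\<in>I. \<forall>k. k \<notin> D \<longrightarrow> b i k = 0) \<and>
     (\<forall>i\<in>I. \<forall>i'\<in>I. (\<Sum>k\<in>D. cnj (b i k) * b i' k) = (if i = i' then 1 else 0)) \<and>
     (\<forall>v. (\<forall>k. k \<notin> D \<longrightarrow> v k = 0) \<longrightarrow>
        (\<exists>c. \<forall>k. v k = (\<Sum>i\<in>I. c i * b i k)))"

definition QLS :: "nat \<Rightarrow> (nat \<Rightarrow> nat \<Rightarrow> nat \<Rightarrow> complex) \<Rightarrow> bool" where
  "QLS n Psi \<longleftrightarrow>
     (\<forall>i\<in>{1..n}. onb {1..n} {1..n} (\<lambda>j. Psi i j)) \<and>
     (\<forall>j\<in>{1..n}. onb {1..n} {1..n} (\<lambda>i. Psi i j))"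

definition tensor :: "(nat \<Rightarrow> complex) \<Rightarrow> (nat \<Rightarrow> complex) \<Rightarrow> (nat \<times> nat \<Rightarrow> complex)" where
  "tensor u v = (\<lambda>(a, b). u a * v b)"

definition orthogonal_QLS :: "nat \<Rightarrow> (nat \<Rightarrow> nat \<Rightarrow> nat \<Rightarrow> complex) \<Rightarrow> (nat \<Rightarrow> nat \<Rightarrow> nat \<Rightarrow> complex) \<Rightarrow> bool" where
  "orthogonal_QLS n Psi Phi \<longleftrightarrow>
     onb ({1..n} \<times> {1..n}) ({1..n} \<times> {1..n}) (\<lambda>(i, j). tensor (Psi i j) (Phi i j))"

definition ket :: "nat \<Rightarrow> nat \<Rightarrow> complex" where
  "ket j = (\<lambda>k. if k = j then 1 else 0)"

definition supp :: "nat \<Rightarrow> (nat \<Rightarrow> complex) \<Rightarrow> nat set" where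
  "supp n v = {k\<in>{1..n}. v k \<noteq> 0}"

definition weight :: "nat \<Rightarrow> (nat \<Rightarrow> complex) \<Rightarrow> nat" where
  "weight n v = card (supp n v)"

definition standard_form :: "nat \<Rightarrow> (nat \<Rightarrow> nat \<Rightarrow> nat \<Rightarrow> complex) \<Rightarrow> (nat \<Rightarrow> nat \<Rightarrow> nat \<Rightarrow> complex) \<Rightarrow> bool" where
  "standard_form n Psi Phi \<longleftrightarrow> (\<forall>j\<in>{1..n}. Psi 1 j = ket j \<and> Phi 1 j = ket j)"

end

theory Submission
  imports Defs
begin

(*
  Fix the column j and write P s, F s for the entries of Psi and Phi in row s of that column.
  Both families are orthonormal bases with P 1 = F 1 = |j>. Orthogonality of the product vector
  of cell (s, j) to the product vector |a> (x) |a> of cell (1, a) makes P s and F s disjointly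
  supported for s <> 1, and orthogonality to |j> removes the coordinate j from both. If P i has
  weight 4, only one coordinate m is left for F i, so F i is |m> up to a phase and no other F r
  meets m.

  Suppose some other F r had two nonzero coordinates a and b. Completeness of the basis F gives
  a second row l with the same property, so the columns a and b of the unitary matrix (P s x)
  vanish in rows 1, r and l. Orthogonality of the columns a, b, c, d (c and d the remaining
  coordinates) then says that their restrictions x_a, ..., x_d to the two remaining rows p, q
  satisfy <x_y, x_z> = - conj (u y) * u z for y in {a, b} and z <> y, where u = P i is nonzero
  at a, b, c, d. A row of P that meets both c and d vanishes at a and b, because the
  corresponding row of F is then supported in {a, b} and orthogonal to F r. Hence each of the
  rows p, q contributes to <x_a, x_b> a nonnegative multiple of conj (u a) * u b, which
  contradicts <x_a, x_b> = - conj (u a) * u b.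
*)

lemma onb_orthonormal:
  "onb I D b \<Longrightarrow> i \<in> I \<Longrightarrow> i' \<in> I \<Longrightarrow>
    (\<Sum>k\<in>D. cnj (b i k) * b i' k) = (if i = i' then 1 else 0)"
  unfolding onb_def by blast

lemma onb_completeness:
  assumes b: "onb I D b" and "finite I" "finite D" "x \<in> D"
  shows "(\<Sum>i\<in>I. cnj (b i x) * b i y) = (if x = y then 1 else 0)"
proof -
  define e :: "'b \<Rightarrow> complex" where "e = (\<lambda>k. if k = x then 1 else 0)"
  have "\<forall>k. k \<notin> D \<longrightarrow> e k = 0"
    using \<open>x \<in> D\<close> by (auto simp: e_def)
  then obtain c where c: "\<And>k. e k = (\<Sum>i\<in>I. c i * b i k)"
    using b unfolding onb_def by blast
  have c_coeff: "c i' = cnj (b i' x)" if "i' \<in> I" for i'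
  proof -
    have "cnj (b i' x) = (\<Sum>k\<in>D. cnj (b i' k) * e k)"
      using assms(3,4) by (simp add: e_def if_distrib cong: if_cong)
    also have "\<dots> = (\<Sum>i\<in>I. c i * (\<Sum>k\<in>D. cnj (b i' k) * b i k))"
      by (simp add: c sum_distrib_left mult.left_commute sum.swap[of _ D])
    also have "\<dots> = (\<Sum>i\<in>I. c i * (if i' = i then 1 else 0))"
      using onb_orthonormal[OF b that] by (intro sum.cong) simp_all
    also have "\<dots> = c i'"
      using assms(2) that by (simp add: if_distrib cong: if_cong)
    finally show ?thesis ..
  qed
  have "e y = (\<Sum>i\<in>I. cnj (b i x) * b i y)"
    by (simp add: c c_coeff)
  then show ?thesis
    by (simp add: e_def eq_commute)
qed

lemma onb_ex_nonzero:
  assumes "onb I D b" "i \<in> I"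
  shows "\<exists>k\<in>D. b i k \<noteq> 0"
proof (rule ccontr)
  assume "\<not> (\<exists>k\<in>D. b i k \<noteq> 0)"
  then have "(\<Sum>k\<in>D. cnj (b i k) * b i k) = 0"
    by simp
  with onb_orthonormal[OF assms assms(2)] show False
    by simp
qed

lemma onb_orthogonal_to_concentrated:
  assumes b: "onb I D b" and "finite D" "s \<in> I" "r \<in> I" "r \<noteq> s" "m \<in> D"
    and concentrated: "\<And>k. k \<in> D \<Longrightarrow> k \<noteq> m \<Longrightarrow> b s k = 0"
  shows "b r m = 0"
proof -
  have sum_at_m: "(\<Sum>k\<in>D. cnj (b s k) * b r' k) = cnj (b s m) * b r' m" for r'
    using assms(2,6) concentrated
    by (subst sum.mono_neutral_right[of D "{m}"]) auto
  have "cnj (b s m) * b s m = 1"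
    using onb_orthonormal[OF b \<open>s \<in> I\<close> \<open>s \<in> I\<close>] sum_at_m by simp
  moreover have "cnj (b s m) * b r m = 0"
    using onb_orthonormal[OF b \<open>s \<in> I\<close> \<open>r \<in> I\<close>] sum_at_m \<open>r \<noteq> s\<close> by simp
  ultimately show ?thesis
    by auto
qed

lemma orthogonal_QLS_disjoint_supports:
  assumes orth: "orthogonal_QLS n Psi Phi" and std: "standard_form n Psi Phi"
    and "r \<in> {1..n}" "r \<noteq> 1" "l \<in> {1..n}" "a \<in> {1..n}"
  shows "Psi r l a * Phi r l a = 0"
proof -
  let ?T = "\<lambda>(i, j). tensor (Psi i j) (Phi i j)"
  have "?T (1, a) = tensor (ket a) (ket a)"
    using std \<open>a \<in> {1..n}\<close> unfolding standard_form_def by simp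
  then have "?T (r, l) (a, a) = (\<Sum>k\<in>{1..n} \<times> {1..n}. cnj (?T (1, a) k) * ?T (r, l) k)"
    using \<open>a \<in> {1..n}\<close>
    by (subst sum.mono_neutral_right[of _ "{(a, a)}"]) (auto simp: tensor_def ket_def split: if_splits)
  also have "\<dots> = 0"
    using orth onb_orthonormal[of _ _ ?T "(1, a)" "(r, l)"] assms(3-6)
    unfolding orthogonal_QLS_def by auto
  finally show ?thesis
    by (simp add: tensor_def)
qed

lemma weight_ket: "j \<in> {1..n} \<Longrightarrow> weight n (ket j) = 1"
  by (simp add: weight_def supp_def ket_def)

lemma weight_eq_1I:
  assumes "m \<in> {1..n}" "v m \<noteq> 0" "\<And>k. k \<in> {1..n} \<Longrightarrow> k \<noteq> m \<Longrightarrow> v k = 0"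
  shows "weight n v = 1"
proof -
  have "supp n v = {m}"
    using assms unfolding supp_def by blast
  then show ?thesis
    by (simp add: weight_def)
qed

lemma gram_nonneg_multiple:
  fixes xa xb xc ua ub uc :: complex
  assumes ac: "cnj xa * xc = - (cnj ua * uc)" and bc: "cnj xb * xc = - (cnj ub * uc)"
    and "ua \<noteq> 0" "uc \<noteq> 0"
  shows "\<exists>t::real. t \<ge> 0 \<and> cnj xa * xb = of_real t * (cnj ua * ub)"
proof -
  have "xc \<noteq> 0"
    using ac assms(3,4) by auto
  have "cnj xa = - (cnj ua * uc) / xc"
    using ac \<open>xc \<noteq> 0\<close> by (simp add: field_simps)
  moreover have "xb = - (ub * cnj uc) / cnj xc"
    using arg_cong[OF bc, of cnj] \<open>xc \<noteq> 0\<close> by (simp add: field_simps)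
  ultimately have "cnj xa * xb = (uc * cnj uc) / (xc * cnj xc) * (cnj ua * ub)"
    by (simp add: field_simps)
  also have "(uc * cnj uc) / (xc * cnj xc) = of_real ((norm uc)\<^sup>2 / (norm xc)\<^sup>2)"
    by (simp add: complex_norm_square[symmetric])
  finally show ?thesis
    by (intro exI[of _ "(norm uc)\<^sup>2 / (norm xc)\<^sup>2"]) simp
qed

lemma two_row_gram_nonneg_multiple:
  fixes pa pb pc pd qa qb qc qd ua ub uc ud :: complex
  assumes u: "ua \<noteq> 0" "uc \<noteq> 0" "ud \<noteq> 0"
    and ac: "cnj pa * pc + cnj qa * qc = - (cnj ua * uc)"
    and bc: "cnj pb * pc + cnj qb * qc = - (cnj ub * uc)"
    and ad: "cnj pa * pd + cnj qa * qd = - (cnj ua * ud)"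
    and bd: "cnj pb * pd + cnj qb * qd = - (cnj ub * ud)"
    and p: "(pa = 0 \<and> pb = 0) \<or> pc = 0 \<or> pd = 0"
  shows "\<exists>t::real. t \<ge> 0 \<and> cnj qa * qb = of_real t * (cnj ua * ub)"
  using p
proof (elim disjE conjE)
  assume "pc = 0"
  then show ?thesis
    using gram_nonneg_multiple[of qa qc ua uc qb ub] ac bc u by simp
next
  assume "pd = 0"
  then show ?thesis
    using gram_nonneg_multiple[of qa qd ua ud qb ub] ad bd u by simp
next
  assume "pa = 0" "pb = 0"
  then show ?thesis
    using gram_nonneg_multiple[of qa qc ua uc qb ub] ac bc u by simp
qed

lemma two_row_gram_impossible:
  fixes pa pb pc pd qa qb qc qd ua ub uc ud :: complex
  assumes u: "ua \<noteq> 0" "ub \<noteq> 0" "uc \<noteq> 0" "ud \<noteq> 0"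
    and ab: "cnj pa * pb + cnj qa * qb = - (cnj ua * ub)"
    and ac: "cnj pa * pc + cnj qa * qc = - (cnj ua * uc)"
    and bc: "cnj pb * pc + cnj qb * qc = - (cnj ub * uc)"
    and ad: "cnj pa * pd + cnj qa * qd = - (cnj ua * ud)"
    and bd: "cnj pb * pd + cnj qb * qd = - (cnj ub * ud)"
    and p: "(pa = 0 \<and> pb = 0) \<or> pc = 0 \<or> pd = 0"
    and q: "(qa = 0 \<and> qb = 0) \<or> qc = 0 \<or> qd = 0"
  shows False
proof -
  obtain s where s: "s \<ge> 0" "cnj qa * qb = of_real s * (cnj ua * ub)"
    using two_row_gram_nonneg_multiple[OF _ _ _ ac bc ad bd p] u by blast
  have "\<exists>t::real. t \<ge> 0 \<and> cnj pa * pb = of_real t * (cnj ua * ub)"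
    using two_row_gram_nonneg_multiple[where pa = qa and pb = qb and pc = qc and pd = qd
        and qa = pa and qb = pb and qc = pc and qd = pd and ua = ua and ub = ub and uc = uc
        and ud = ud] ac bc ad bd q u
    by (simp add: add.commute)
  then obtain t where t: "t \<ge> 0" "cnj pa * pb = of_real t * (cnj ua * ub)"
    by blast
  have "of_real (t + s + 1) * (cnj ua * ub) = 0"
    using ab s t by (simp add: algebra_simps)
  moreover have "of_real (t + s + 1) \<noteq> (0::complex)"
    using s t by (simp only: of_real_eq_0_iff)
  ultimately show False
    using u by (metis mult_eq_0_iff complex_cnj_zero_iff)
qed

lemma complement_of_four_in_six:
  fixes w x y z :: nat
  assumes "distinct [w, x, y, z]" "{w, x, y, z} \<subseteq> {1..6}"
  obtains c d where "distinct [w, x, y, z, c, d]" "{1..6} = {w, x, y, z, c, d}"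
proof -
  have "card ({1..6::nat} - {w, x, y, z}) = 2"
    using assms by (simp add: card_Diff_subset)
  then obtain c d where cd: "{1..6} - {w, x, y, z} = {c, d}" "c \<noteq> d"
    by (auto simp: card_2_iff)
  have "c \<notin> {w, x, y, z}" "d \<notin> {w, x, y, z}"
    using cd(1) by blast+
  then have "distinct [w, x, y, z, c, d]"
    using assms(1) cd(2) by auto
  moreover have "{1..6} = {w, x, y, z, c, d}"
    using assms(2) cd(1) by blast
  ultimately show thesis
    using that by blast
qed

locale qls6_column =
  fixes P F :: "nat \<Rightarrow> nat \<Rightarrow> complex" and j :: nat
  assumes onb_P: "onb {1..6} {1..6} P" and onb_F: "onb {1..6} {1..6} F"
    and j: "j \<in> {1..6}"
    and P_1: "P 1 = ket j" and F_1: "F 1 = ket j"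
    and disjoint: "s \<in> {1..6} \<Longrightarrow> s \<noteq> 1 \<Longrightarrow> x \<in> {1..6} \<Longrightarrow> P s x * F s x = 0"
begin

lemma P_j: "s \<in> {1..6} \<Longrightarrow> s \<noteq> 1 \<Longrightarrow> P s j = 0"
  by (rule onb_orthogonal_to_concentrated[OF onb_P _ _ _ _ j]) (use P_1 in \<open>auto simp: ket_def\<close>)

lemma F_j: "s \<in> {1..6} \<Longrightarrow> s \<noteq> 1 \<Longrightarrow> F s j = 0"
  by (rule onb_orthogonal_to_concentrated[OF onb_F _ _ _ _ j]) (use F_1 in \<open>auto simp: ket_def\<close>)

lemma P_completeness:
  "x \<in> {1..6} \<Longrightarrow> (\<Sum>s\<in>{1..6}. cnj (P s x) * P s y) = (if x = y then 1 else 0)"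
  using onb_completeness[OF onb_P] by simp

lemma F_completeness:
  "x \<in> {1..6} \<Longrightarrow> (\<Sum>s\<in>{1..6}. cnj (F s x) * F s y) = (if x = y then 1 else 0)"
  using onb_completeness[OF onb_F] by simp

lemma gram_remaining_rows:
  assumes rows: "distinct [1, i, r, l, p, q]" "{1..6} = {1, i, r, l, p, q}"
    and x: "x \<in> {1..6}" "x \<noteq> j" "P r x = 0" "P l x = 0"
    and "y \<noteq> x"
  shows "cnj (P p x) * P p y + cnj (P q x) * P q y = - (cnj (P i x) * P i y)"
proof -
  have "P 1 x = 0"
    using P_1 \<open>x \<noteq> j\<close> by (simp add: ket_def)
  moreover have "(\<Sum>s\<in>{1, i, r, l, p, q}. cnj (P s x) * P s y) = 0"
    using P_completeness[OF x(1), of y] rows(2) \<open>y \<noteq> x\<close> by simp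
  ultimately show ?thesis
    using rows(1) x(3,4) by (simp add: add_eq_0_iff2 add.assoc)
qed

lemma weight_P_eq_4_gap:
  assumes "i \<in> {1..6}" "weight 6 (P i) = 4"
  obtains m where "i \<noteq> 1" "m \<in> {1..6}" "m \<noteq> j"
    "\<And>x. x \<in> {1..6} \<Longrightarrow> x \<noteq> j \<Longrightarrow> x \<noteq> m \<Longrightarrow> P i x \<noteq> 0"
proof -
  have "i \<noteq> 1"
  proof
    assume "i = 1"
    then have "weight 6 (P i) = 1"
      using weight_ket[OF j] P_1 by simp
    with assms(2) show False
      by simp
  qed
  have "supp 6 (P i) \<subseteq> {1..6} - {j}"
    using P_j[OF assms(1) \<open>i \<noteq> 1\<close>] by (auto simp: supp_def)
  then have "card ({1..6} - {j} - supp 6 (P i)) = card ({1..6::nat} - {j}) - 4"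
    using assms(2) by (simp add: weight_def card_Diff_subset finite_subset)
  also have "card ({1..6::nat} - {j}) = 5"
    using j by simp
  finally obtain m where m: "{1..6} - {j} - supp 6 (P i) = {m}"
    by (auto simp: card_1_singleton_iff)
  show thesis
  proof (rule that)
    show "i \<noteq> 1" "m \<in> {1..6}" "m \<noteq> j"
      using \<open>i \<noteq> 1\<close> m by blast+
    show "P i x \<noteq> 0" if "x \<in> {1..6}" "x \<noteq> j" "x \<noteq> m" for x
    proof -
      have "x \<in> supp 6 (P i)"
        using m that by blast
      then show ?thesis
        by (simp add: supp_def)
    qed
  qed
qed

end

locale qls6_column_gap = qls6_column +
  fixes i m :: nat
  assumes i: "i \<in> {1..6}" and i_ne_1: "i \<noteq> 1"
    and m: "m \<in> {1..6}" "m \<noteq> j"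
    and P_i_nonzero: "x \<in> {1..6} \<Longrightarrow> x \<noteq> j \<Longrightarrow> x \<noteq> m \<Longrightarrow> P i x \<noteq> 0"
begin

lemma F_i_concentrated: "x \<in> {1..6} \<Longrightarrow> x \<noteq> m \<Longrightarrow> F i x = 0"
  using F_j[OF i i_ne_1] disjoint[OF i i_ne_1] P_i_nonzero by (cases "x = j") auto

lemma F_i_m_nonzero: "F i m \<noteq> 0"
  using onb_ex_nonzero[OF onb_F i] F_i_concentrated by blast

lemma weight_F_i: "weight 6 (F i) = 1"
  using weight_eq_1I[of m 6 "F i", OF m(1) F_i_m_nonzero] F_i_concentrated by blast

lemma F_m: "r \<in> {1..6} \<Longrightarrow> r \<noteq> i \<Longrightarrow> F r m = 0"
  using onb_orthogonal_to_concentrated[OF onb_F _ i _ _ m(1) F_i_concentrated] by simp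

lemma F_common_row:
  assumes r: "r \<in> {1..6}" "r \<noteq> 1" "r \<noteq> i"
    and ab: "a \<in> {1..6}" "b \<in> {1..6}" "a \<noteq> b" "F r a \<noteq> 0" "F r b \<noteq> 0"
  obtains l where "l \<in> {1..6}" "l \<notin> {1, i, r}" "F l a \<noteq> 0" "F l b \<noteq> 0"
proof (rule ccontr)
  assume "\<not> thesis"
  with that have none: "F l a = 0 \<or> F l b = 0" if "l \<in> {1..6}" "l \<notin> {1, i, r}" for l
    using that by blast
  have "a \<noteq> j" "a \<noteq> m"
    using ab F_j[OF r(1,2)] F_m[OF r(1,3)] by auto
  then have "F 1 a = 0" "F i a = 0"
    using F_1 F_i_concentrated[OF ab(1)] by (simp_all add: ket_def)
  then have "cnj (F s a) * F s b = 0" if "s \<in> {1..6}" "s \<noteq> r" for s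
    using none[of s] that by (cases "s \<in> {1, i}") auto
  then have "(\<Sum>s\<in>{1..6}. cnj (F s a) * F s b) = cnj (F r a) * F r b"
    using r by (subst sum.mono_neutral_right[of _ "{r}"]) auto
  with F_completeness[OF ab(1), of b] ab show False
    by simp
qed

lemma P_row_avoids_pair:
  assumes cols: "distinct [j, m, a, b, c, d]" "{1..6} = {j, m, a, b, c, d}"
    and r: "r \<in> {1..6}" "F r a \<noteq> 0" "F r b \<noteq> 0"
    and s: "s \<in> {1..6}" "s \<notin> {1, i, r}"
  shows "(P s a = 0 \<and> P s b = 0) \<or> P s c = 0 \<or> P s d = 0"
proof (rule ccontr)
  assume "\<not> ?thesis"
  then have "P s c \<noteq> 0" "P s d \<noteq> 0" and P_s_ab: "P s a \<noteq> 0 \<or> P s b \<noteq> 0"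
    by auto
  have abcd: "a \<in> {1..6}" "b \<in> {1..6}" "c \<in> {1..6}" "d \<in> {1..6}"
    using cols(2) by blast+
  have "F s c = 0" "F s d = 0" "F s j = 0" "F s m = 0"
    using disjoint[OF s(1) _ abcd(3)] disjoint[OF s(1) _ abcd(4)] \<open>P s c \<noteq> 0\<close> \<open>P s d \<noteq> 0\<close>
      F_j[OF s(1)] F_m[OF s(1)] s(2) by auto
  moreover have "(\<Sum>k\<in>{j, m, a, b, c, d}. cnj (F s k) * F r k) = 0"
    using onb_orthonormal[OF onb_F s(1) r(1)] cols(2) s(2) by simp
  moreover have "(\<Sum>k\<in>{j, m, a, b, c, d}. cnj (F s k) * F s k) = 1"
    using onb_orthonormal[OF onb_F s(1) s(1)] cols(2) by simp
  ultimately have "cnj (F s a) * F r a + cnj (F s b) * F r b = 0"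
    and "cnj (F s a) * F s a + cnj (F s b) * F s b = 1"
    using cols(1) by (simp_all add: add.assoc)
  then have "F s a \<noteq> 0" "F s b \<noteq> 0"
    using r(2,3) by auto
  then show False
    using P_s_ab disjoint[OF s(1) _ abcd(1)] disjoint[OF s(1) _ abcd(2)] s(2) by auto
qed

lemma F_nonzero_unique:
  assumes r: "r \<in> {1..6}" "r \<noteq> 1" "r \<noteq> i"
    and ab: "a \<in> {1..6}" "b \<in> {1..6}" "F r a \<noteq> 0" "F r b \<noteq> 0"
  shows "a = b"
proof (rule ccontr)
  assume "a \<noteq> b"
  have "a \<notin> {j, m}" "b \<notin> {j, m}"
    using ab F_j[OF r(1,2)] F_m[OF r(1,3)] by auto
  obtain l where l: "l \<in> {1..6}" "l \<notin> {1, i, r}" "F l a \<noteq> 0" "F l b \<noteq> 0"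
    using F_common_row[OF r ab(1,2) \<open>a \<noteq> b\<close> ab(3,4)] .
  obtain c d where cols: "distinct [j, m, a, b, c, d]" "{1..6} = {j, m, a, b, c, d}"
    using complement_of_four_in_six[of j m a b] \<open>a \<noteq> b\<close> \<open>a \<notin> {j, m}\<close> \<open>b \<notin> {j, m}\<close> m j ab
    by auto
  obtain p q where rows: "distinct [1, i, r, l, p, q]" "{1..6} = {1, i, r, l, p, q}"
    using complement_of_four_in_six[of 1 i r l] i i_ne_1 r l by auto
  have P_zero: "P r a = 0" "P r b = 0" "P l a = 0" "P l b = 0"
    using disjoint[OF r(1,2)] disjoint[of l] l ab by auto
  have gram: "cnj (P p x) * P p y + cnj (P q x) * P q y = - (cnj (P i x) * P i y)"
    if "x \<in> {a, b}" "y \<noteq> x" for x y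
    using gram_remaining_rows[OF rows, of x y] that ab P_zero \<open>a \<notin> {j, m}\<close> \<open>b \<notin> {j, m}\<close>
    by auto
  have "p \<in> {1..6}" "p \<notin> {1, i, r}" "q \<in> {1..6}" "q \<notin> {1, i, r}"
    using rows by auto
  then have avoid: "(P p a = 0 \<and> P p b = 0) \<or> P p c = 0 \<or> P p d = 0"
      "(P q a = 0 \<and> P q b = 0) \<or> P q c = 0 \<or> P q d = 0"
    using P_row_avoids_pair[OF cols r(1) ab(3,4)] by blast+
  have "{a, b, c, d} \<subseteq> {1..6}"
    using cols(2) by blast
  then have "P i a \<noteq> 0" "P i b \<noteq> 0" "P i c \<noteq> 0" "P i d \<noteq> 0"
    using P_i_nonzero cols(1) by auto
  then show False
    using two_row_gram_impossible[OF _ _ _ _ gram gram gram gram gram avoid] cols by auto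
qed

lemma weight_F_eq_1: "k \<in> {1..6} \<Longrightarrow> weight 6 (F k) = 1"
proof -
  assume k: "k \<in> {1..6}"
  consider "k = 1" | "k = i" | "k \<noteq> 1" "k \<noteq> i"
    by blast
  then show ?thesis
  proof cases
    case 1
    then show ?thesis
      using F_1 weight_ket[OF j] by simp
  next
    case 2
    then show ?thesis
      using weight_F_i by simp
  next
    case 3
    obtain a where "a \<in> {1..6}" "F k a \<noteq> 0"
      using onb_ex_nonzero[OF onb_F k] by blast
    then show ?thesis
      using weight_eq_1I[of a 6 "F k"] F_nonzero_unique[OF k 3] by blast
  qed
qed

end

context qls6_column
begin

lemma weight_F_eq_1_if_weight_P_eq_4:
  assumes "i \<in> {1..6}" "weight 6 (P i) = 4" "k \<in> {1..6}"
  shows "weight 6 (F k) = 1"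
proof -
  obtain m where gap: "i \<noteq> 1" "m \<in> {1..6}" "m \<noteq> j"
    "\<And>x. x \<in> {1..6} \<Longrightarrow> x \<noteq> j \<Longrightarrow> x \<noteq> m \<Longrightarrow> P i x \<noteq> 0"
    using weight_P_eq_4_gap[OF assms(1,2)] by blast
  interpret qls6_column_gap P F j i m
    using assms(1) gap by unfold_locales
  show ?thesis
    using weight_F_eq_1[OF assms(3)] .
qed

end

theorem mainTheorem6:
  fixes Psi Phi :: "nat \<Rightarrow> nat \<Rightarrow> nat \<Rightarrow> complex"
  assumes "QLS 6 Psi" and "QLS 6 Phi"
    and "orthogonal_QLS 6 Psi Phi"
    and "standard_form 6 Psi Phi"
    and "i \<in> {1..6}" and "j \<in> {1..6}"
    and "weight 6 (Psi i j) = 4"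
  shows "\<forall>k\<in>{1..6}. weight 6 (Phi k j) = 1"
proof -
  interpret qls6_column "\<lambda>s. Psi s j" "\<lambda>s. Phi s j" j
  proof
    show "onb {1..6} {1..6} (\<lambda>s. Psi s j)" "onb {1..6} {1..6} (\<lambda>s. Phi s j)"
      using assms(1,2,6) unfolding QLS_def by blast+
    show "j \<in> {1..6}" by fact
    show "Psi 1 j = ket j" "Phi 1 j = ket j"
      using assms(4,6) unfolding standard_form_def by blast+
    show "Psi s j x * Phi s j x = 0" if "s \<in> {1..6}" "s \<noteq> 1" "x \<in> {1..6}" for s x
      using orthogonal_QLS_disjoint_supports[OF assms(3,4) that(1,2) assms(6) that(3)] .
  qed
  show ?thesis
    using weight_F_eq_1_if_weight_P_eq_4[OF assms(5,7)] by blast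
qed

end
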